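(* Let $\mathcal T$ be a complete binary tree and let $\mathcal A,\mathcal B,\mathcal C\subseteq\mathcal V(\mathcal T)$. Then $\mathrm{desc}(\mathcal A)\subseteq\mathrm{desc}\big((\mathcal A\cup\mathcal B)\setminus\mathrm{desc}(\mathcal C)\big)\cup\mathrm{desc}\big(\mathcal C\setminus\overline{\mathrm{desc}}(\mathcal B)\big)$.
   Context: $\mathcal V(\mathcal T)$ is the vertex set of the complete binary tree (nodes are binary strings, root is the empty string, children of $u$ are $u0,u1$). For a node $u$, $\mathrm{desc}(u)$ is the set of descendants of $u$ including $u$, and $\overline{\mathrm{desc}}(u)$ the set of descendants of $u$ excluding $u$; for a set $\mathcal U$ of nodes, $\mathrm{desc}(\mathcal U)=\bigcup_{u\in\mathcal U}\mathrm{desc}(u)$ and $\overline{\mathrm{desc}}(\mathcal U)=\bigcup_{u\in\mathcal U}\overline{\mathrm{desc}}(u)$. *)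

theory Defs
  imports Main
begin

text \<open>Nodes of the complete binary tree are binary strings (bool lists); the root is
  the empty list, the children of u are u @ [False] and u @ [True].
  v is a descendant of u iff u is a prefix of v.\<close>

type_synonym node = "bool list"

definition desc :: "node \<Rightarrow> node set" where
  "desc u = {v. \<exists>w. v = u @ w}"

definition sdesc :: "node \<Rightarrow> node set" where
  "sdesc u = desc u - {u}"

definition descS :: "node set \<Rightarrow> node set" where
  "descS U = (\<Union>u\<in>U. desc u)"

definition sdescS :: "node set \<Rightarrow> node set" where
  "sdescS U = (\<Union>u\<in>U. sdesc u)"

end

theory Submission
  imports Defs
begin

text \<open>Take x below some a \<in> A. If a lies below no node of C, then a itself witnesses the
  first union. Otherwise let m be a highest node of B \<union> C above a, i.e. one that is not a
  strict descendant of any node of B \<union> C. If m \<in> C, then m is a node of C that is not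
  strictly below B; if m \<notin> C, then m \<in> B and m lies below no node of C. Either way
  x is below m.\<close>

lemma desc_refl [simp]: "u \<in> desc u"
  unfolding desc_def by auto

lemma desc_trans: "v \<in> desc u \<Longrightarrow> x \<in> desc v \<Longrightarrow> x \<in> desc u"
  unfolding desc_def by auto

lemma desc_length_le_imp_eq: "v \<in> desc u \<Longrightarrow> length v \<le> length u \<Longrightarrow> v = u"
  unfolding desc_def by auto

lemma descS_eq_Un_sdescS: "descS U = U \<union> sdescS U"
  unfolding descS_def sdescS_def sdesc_def by auto

lemma sdescS_Un: "sdescS (U \<union> V) = sdescS U \<union> sdescS V"
  unfolding sdescS_def by auto

lemma ex_maximal_ancestor:
  assumes "a \<in> descS U"
  obtains m where "m \<in> U - sdescS U" and "a \<in> desc m"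
proof -
  let ?anc = "\<lambda>m. m \<in> U \<and> a \<in> desc m"
  define m where "m = arg_min length ?anc"
  obtain u where "?anc u"
    using assms unfolding descS_def by auto
  then have "?anc m \<and> (\<forall>p. ?anc p \<longrightarrow> length m \<le> length p)"
    unfolding m_def by (rule arg_min_nat_lemma)
  then have m: "?anc m" and shortest: "\<And>p. ?anc p \<Longrightarrow> length m \<le> length p"
    by auto
  have "m \<notin> sdesc p" if "p \<in> U" for p
  proof
    assume "m \<in> sdesc p"
    then have "m \<in> desc p" and "m \<noteq> p"
      unfolding sdesc_def by auto
    moreover have "length m \<le> length p"
      using shortest \<open>p \<in> U\<close> \<open>m \<in> desc p\<close> m desc_trans by blast
    ultimately show False
      using desc_length_le_imp_eq by blast
  qed
  then have "m \<in> U - sdescS U"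
    using m unfolding sdescS_def by auto
  with m show thesis
    using that by blast
qed

theorem proposition2p3:
  fixes A B C :: "node set"
  shows "descS A \<subseteq> descS ((A \<union> B) - descS C) \<union> descS (C - sdescS B)"
proof
  fix x assume "x \<in> descS A"
  then obtain a where "a \<in> A" and "x \<in> desc a"
    unfolding descS_def by auto
  show "x \<in> descS ((A \<union> B) - descS C) \<union> descS (C - sdescS B)"
  proof (cases "a \<in> descS C")
    case False
    with \<open>a \<in> A\<close> \<open>x \<in> desc a\<close> show ?thesis
      unfolding descS_def by auto
  next
    case True
    then have "a \<in> descS (B \<union> C)"
      unfolding descS_def by auto
    then obtain m where m: "m \<in> (B \<union> C) - sdescS (B \<union> C)" and "a \<in> desc m"
      by (rule ex_maximal_ancestor)
    then have "x \<in> desc m"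
      using \<open>x \<in> desc a\<close> desc_trans by blast
    moreover have "m \<in> ((A \<union> B) - descS C) \<union> (C - sdescS B)"
      using m by (auto simp: sdescS_Un descS_eq_Un_sdescS)
    ultimately show ?thesis
      unfolding descS_def by auto
  qed
qed

end
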